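(* For $\lambda\in\mathbb R$ let $q_\lambda(x,y)=6x^5y+20\lambda x^3y^3+6xy^5$. Then: (1) if $\lambda=1$, $\mathcal S(q_\lambda)=\{(1,1)\}$; (2) if $\lambda>0$ and $\lambda\ne1$, $\mathcal S(q_\lambda)=\{(2,2)\}$; (3) if $-\tfrac35<\lambda\le0$, $\mathcal S(q_\lambda)=\{(2,3),(3,2)\}$; (4) if $\lambda\le-\tfrac35$, $\mathcal S(q_\lambda)=\{(3,3)\}$.
   Context: A representation of a real binary sextic $p$ is an expression $p=\sum_{j=1}^r\lambda_j(\alpha_jx+\beta_jy)^{6}$ with $r\ge0$, $\alpha_j,\beta_j\in\mathbb R$, $0\ne\lambda_j\in\mathbb R$; it is honest if the linear forms $\alpha_jx+\beta_jy$ are pairwise non-proportional. Its badge is $(a,b)$ where $a=\#\{j:\lambda_j>0\}$, $b=\#\{j:\lambda_j<0\}$; $\mathcal B(p)$ is the set of badges of honest representations. With $(a,b)\preceq(c,d)$ iff $a\le c,b\le d$, a signature is a minimal element of $\mathcal B(p)$, and $\mathcal S(p)$ is the set of signatures. *)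

theory Defs
  imports Complex_Main
begin

text \<open>A real binary sextic is represented by its polynomial function of (x,y);
  over the reals, polynomial identity and identity of functions coincide.\<close>

definition honest_rep ::
  "(real \<Rightarrow> real \<Rightarrow> real) \<Rightarrow> nat \<Rightarrow> (nat \<Rightarrow> real) \<Rightarrow> (nat \<Rightarrow> real) \<Rightarrow> (nat \<Rightarrow> real) \<Rightarrow> bool"
where
  "honest_rep p r lam al be \<longleftrightarrow>
     (\<forall>j<r. lam j \<noteq> 0) \<and>
     (\<forall>i<r. \<forall>j<r. i \<noteq> j \<longrightarrow> al i * be j - al j * be i \<noteq> 0) \<and>
     (\<forall>x y. p x y = (\<Sum>j<r. lam j * (al j * x + be j * y) ^ 6))"

definition badge :: "nat \<Rightarrow> (nat \<Rightarrow> real) \<Rightarrow> nat \<times> nat" where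
  "badge r lam = (card {j. j < r \<and> lam j > 0}, card {j. j < r \<and> lam j < 0})"

definition badges :: "(real \<Rightarrow> real \<Rightarrow> real) \<Rightarrow> (nat \<times> nat) set" where
  "badges p = {badge r lam | r lam al be. honest_rep p r lam al be}"

definition badge_le :: "nat \<times> nat \<Rightarrow> nat \<times> nat \<Rightarrow> bool" where
  "badge_le u v \<longleftrightarrow> fst u \<le> fst v \<and> snd u \<le> snd v"

definition signatures :: "(real \<Rightarrow> real \<Rightarrow> real) \<Rightarrow> (nat \<times> nat) set" where
  "signatures p = {b \<in> badges p. \<forall>c \<in> badges p. badge_le c b \<longrightarrow> c = b}"

definition q :: "real \<Rightarrow> real \<Rightarrow> real \<Rightarrow> real" where
  "q l x y = 6 * x ^ 5 * y + 20 * l * x ^ 3 * y ^ 3 + 6 * x * y ^ 5"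

end

theory Submission
  imports Defs
begin

(*
  Write n_k(p) for the k-th normalized coefficient of a sextic p (the coefficient of
  x^(6-k) y^k divided by binomial 6 k); q_l has normalized coefficients (0, 1, 0, l, 0, 1, 0),
  and a representation p = sum_j lam_j (al_j x + be_j y)^6 gives
  n_k(p) = sum_j lam_j al_j^(6-k) be_j^k.  Pairing q_l with products of lower-degree forms
  yields the two catalecticant identities the argument rests on:
   - for a binary cubic c, the Hankel form H_l(c) equals sum_j lam_j c(al_j, be_j)^2, so if
     H_l(c) > 0 then some positive term has its node off the zero set of c;
   - a binary quartic vanishing at all nodes satisfies three linear conditions.

  Lower bounds: cubics with H_l > 0 through any k independent nodes show that every honest
  representation has more than k positive terms (k = 0 for l > -1; k = 1 for l > -1, l <> 1;
  k = 2 for l <= -3/5), and the symmetry y -> -y transfers this to the negative terms.  For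
  -1 < l <= 0 the quartic conditions exclude honest representations with four terms, hence
  the badge (2,2).
  Upper bounds: antipodal pairs (u x + y)^6 - (-u x + y)^6 realize the badge (n,n) from
  n-point measures with moments 1, l, 1, giving (1,1), (2,2), (3,3); a five-term
  representation from (x + y)^6 and two pairs (x + t y)^6 + (t x + y)^6 realizes (3,2) or
  (2,3) for -3/5 < l <= 0.
  The theorem follows case by case from two elementary descriptions of minimal badges.
*)

(* Row k of the inverse of the matrix (binomial 6 j * t^j) at the nodes t = -3, ..., 3:
   these weights recover the k-th normalized coefficient from the values p(1, t). *)
definition coeff_weight :: "nat \<Rightarrow> nat \<Rightarrow> real" where
  "coeff_weight k i = [[0, 0, 0, 1, 0, 0, 0],
     [-1/360, 1/40, -1/8, 0, 1/8, -1/40, 1/360],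
     [1/2700, -1/200, 1/20, -49/540, 1/20, -1/200, 1/2700],
     [1/960, -1/120, 13/960, 0, -13/960, 1/120, -1/960],
     [-1/2160, 1/180, -13/720, 7/270, -13/720, 1/180, -1/2160],
     [-1/1440, 1/360, -1/288, 0, 1/288, -1/360, 1/1440],
     [1/720, -1/120, 1/48, -1/36, 1/48, -1/120, 1/720]] ! k ! i"

definition ncoeff :: "nat \<Rightarrow> (real \<Rightarrow> real \<Rightarrow> real) \<Rightarrow> real" where
  "ncoeff k p = (\<Sum>i<7. coeff_weight k i * p 1 (real i - 3))"

lemma sum_lessThan_7: "(\<Sum>i<7. f i) = f 0 + f 1 + f 2 + f 3 + f 4 + f 5 + (f (6::nat) :: real)"
  by (simp add: eval_nat_numeral)

lemma ncoeff_linear_form_power: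
  assumes "k \<le> 6"
  shows "ncoeff k (\<lambda>x y. (a * x + b * y) ^ 6) = a ^ (6 - k) * b ^ k"
proof -
  have binomial: "\<And>t. (a + b * t) ^ 6 = a^6 + 6*t*(a^5*b) + 15*t^2*(a^4*b^2) + 20*t^3*(a^3*b^3)
      + 15*t^4*(a^2*b^4) + 6*t^5*(a*b^5) + t^6*b^6"
    by algebra
  from assms consider "k = 0" | "k = 1" | "k = 2" | "k = 3" | "k = 4" | "k = 5" | "k = 6" by linarith
  then show ?thesis
    by cases (simp_all only: ncoeff_def sum_lessThan_7 mult_1_right binomial;
              simp add: coeff_weight_def field_simps)+
qed

lemma ncoeff_representation:
  assumes "\<forall>x y. p x y = (\<Sum>j<r. lam j * (al j * x + be j * y) ^ 6)" and "k \<le> 6"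
  shows "ncoeff k p = (\<Sum>j<r. lam j * (al j ^ (6 - k) * be j ^ k))"
proof -
  have "ncoeff k p = (\<Sum>j<r. lam j * ncoeff k (\<lambda>x y. (al j * x + be j * y) ^ 6))"
    using assms(1) by (simp add: ncoeff_def sum_distrib_left sum_distrib_right
        sum.swap[of _ "{..<7}"] mult.left_commute)
  then show ?thesis
    using ncoeff_linear_form_power[OF assms(2)] by simp
qed

lemma ncoeff_q:
  "ncoeff 0 (q l) = 0" "ncoeff 1 (q l) = 1" "ncoeff 2 (q l) = 0" "ncoeff 3 (q l) = l"
  "ncoeff 4 (q l) = 0" "ncoeff 5 (q l) = 1" "ncoeff 6 (q l) = 0"
  by (simp_all only: ncoeff_def sum_lessThan_7; simp add: coeff_weight_def q_def field_simps)+

lemma apolar_pairing: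
  assumes "\<forall>x y. q l x y = (\<Sum>j<r. lam j * (al j * x + be j * y) ^ 6)"
  shows "f1 + l * f3 + f5 = (\<Sum>j<r. lam j * (f0 * al j ^ 6 + f1 * (al j ^ 5 * be j)
     + f2 * (al j ^ 4 * be j ^ 2) + f3 * (al j ^ 3 * be j ^ 3) + f4 * (al j ^ 2 * be j ^ 4)
     + f5 * (al j * be j ^ 5) + f6 * be j ^ 6))"
proof -
  have "f1 + l * f3 + f5 = f0 * ncoeff 0 (q l) + f1 * ncoeff 1 (q l) + f2 * ncoeff 2 (q l)
     + f3 * ncoeff 3 (q l) + f4 * ncoeff 4 (q l) + f5 * ncoeff 5 (q l) + f6 * ncoeff 6 (q l)"
    unfolding ncoeff_q by simp
  also have "\<dots> = (\<Sum>j<r. lam j * (f0 * al j ^ 6 + f1 * (al j ^ 5 * be j)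
     + f2 * (al j ^ 4 * be j ^ 2) + f3 * (al j ^ 3 * be j ^ 3) + f4 * (al j ^ 2 * be j ^ 4)
     + f5 * (al j * be j ^ 5) + f6 * be j ^ 6))"
    using ncoeff_representation[OF assms, of 0] ncoeff_representation[OF assms, of 1]
      ncoeff_representation[OF assms, of 2] ncoeff_representation[OF assms, of 3]
      ncoeff_representation[OF assms, of 4] ncoeff_representation[OF assms, of 5]
      ncoeff_representation[OF assms, of 6]
    by (simp add: sum_distrib_left sum.distrib[symmetric] algebra_simps)
  finally show ?thesis .
qed

definition cubic :: "(nat \<Rightarrow> real) \<Rightarrow> real \<Rightarrow> real \<Rightarrow> real" where
  "cubic x a b = x 0 * a ^ 3 + x 1 * a ^ 2 * b + x 2 * a * b ^ 2 + x 3 * b ^ 3"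

(* The quadratic form of the middle (4 x 4) catalecticant of q_l: the pairing of q_l
   with the square of the cubic with coefficients x. *)
definition hankel :: "real \<Rightarrow> (nat \<Rightarrow> real) \<Rightarrow> real" where
  "hankel l x = 2 * x 0 * x 1 + l * (2 * x 0 * x 3 + 2 * x 1 * x 2) + 2 * x 2 * x 3"

lemma hankel_identity:
  assumes "\<forall>x y. q l x y = (\<Sum>j<r. lam j * (al j * x + be j * y) ^ 6)"
  shows "hankel l x = (\<Sum>j<r. lam j * cubic x (al j) (be j) ^ 2)"
proof -
  have "hankel l x = (\<Sum>j<r. lam j * (x 0 ^ 2 * al j ^ 6 + (2 * x 0 * x 1) * (al j ^ 5 * be j)
     + (2 * x 0 * x 2 + x 1 ^ 2) * (al j ^ 4 * be j ^ 2) + (2 * x 0 * x 3 + 2 * x 1 * x 2) * (al j ^ 3 * be j ^ 3)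
     + (2 * x 1 * x 3 + x 2 ^ 2) * (al j ^ 2 * be j ^ 4) + (2 * x 2 * x 3) * (al j * be j ^ 5)
     + x 3 ^ 2 * be j ^ 6))"
    unfolding hankel_def using apolar_pairing[OF assms] by simp
  also have "\<dots> = (\<Sum>j<r. lam j * cubic x (al j) (be j) ^ 2)"
    unfolding cubic_def by (rule sum.cong) (simp, algebra)
  finally show ?thesis .
qed

lemma positive_node_off_cubic:
  assumes "\<forall>x y. q l x y = (\<Sum>j<r. lam j * (al j * x + be j * y) ^ 6)" and "hankel l x > 0"
  shows "\<exists>j<r. lam j > 0 \<and> cubic x (al j) (be j) \<noteq> 0"
proof (rule ccontr)
  assume "\<not> ?thesis"
  then have "lam j * cubic x (al j) (be j) ^ 2 \<le> 0" if "j < r" for j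
    using that by (cases "lam j > 0") (auto intro: mult_nonpos_nonneg)
  then have "(\<Sum>j<r. lam j * cubic x (al j) (be j) ^ 2) \<le> 0"
    by (intro sum_nonpos) simp
  with assms show False
    by (simp add: hankel_identity[OF assms(1)])
qed

definition quartic :: "(nat \<Rightarrow> real) \<Rightarrow> real \<Rightarrow> real \<Rightarrow> real" where
  "quartic g a b = g 0 * a ^ 4 + g 1 * a ^ 3 * b + g 2 * a ^ 2 * b ^ 2 + g 3 * a * b ^ 3 + g 4 * b ^ 4"

(* The 3 x 5 catalecticant: a quartic vanishing at all nodes of a representation of q_l
   has its coefficient vector in the kernel of the catalecticant matrix of q_l. *)
lemma quartic_through_nodes:
  assumes "\<forall>x y. q l x y = (\<Sum>j<r. lam j * (al j * x + be j * y) ^ 6)"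
    and "\<And>j. j < r \<Longrightarrow> quartic g (al j) (be j) = 0"
  shows "g 1 + l * g 3 = 0" "g 0 + l * g 2 + g 4 = 0" "l * g 1 + g 3 = 0"
proof -
  have "m0 * (g 1 + l * g 3) + m1 * (g 0 + l * g 2 + g 4) + m2 * (l * g 1 + g 3) =
     (\<Sum>j<r. lam j * (quartic g (al j) (be j) * (m0 * al j ^ 2 + m1 * al j * be j + m2 * be j ^ 2)))"
    for m0 m1 m2
  proof -
    have "m0 * (g 1 + l * g 3) + m1 * (g 0 + l * g 2 + g 4) + m2 * (l * g 1 + g 3)
        = (g 1 * m0 + g 0 * m1) + l * (g 3 * m0 + g 2 * m1 + g 1 * m2) + (g 4 * m1 + g 3 * m2)"
      by algebra
    also have "\<dots> = (\<Sum>j<r. lam j * ((g 0 * m0) * al j ^ 6 + (g 1 * m0 + g 0 * m1) * (al j ^ 5 * be j)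
       + (g 2 * m0 + g 1 * m1 + g 0 * m2) * (al j ^ 4 * be j ^ 2)
       + (g 3 * m0 + g 2 * m1 + g 1 * m2) * (al j ^ 3 * be j ^ 3)
       + (g 4 * m0 + g 3 * m1 + g 2 * m2) * (al j ^ 2 * be j ^ 4)
       + (g 4 * m1 + g 3 * m2) * (al j * be j ^ 5) + (g 4 * m2) * be j ^ 6))"
      by (rule apolar_pairing[OF assms(1)])
    also have "\<dots> = (\<Sum>j<r. lam j * (quartic g (al j) (be j) * (m0 * al j ^ 2 + m1 * al j * be j + m2 * be j ^ 2)))"
      unfolding quartic_def by (rule sum.cong) (simp, algebra)
    finally show ?thesis .
  qed
  then have "m0 * (g 1 + l * g 3) + m1 * (g 0 + l * g 2 + g 4) + m2 * (l * g 1 + g 3) = 0" for m0 m1 m2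
    using assms(2) by simp
  from this[of 1 0 0] this[of 0 1 0] this[of 0 0 1]
  show "g 1 + l * g 3 = 0" "g 0 + l * g 2 + g 4 = 0" "l * g 1 + g 3 = 0" by simp_all
qed

lemma badgesE:
  assumes "c \<in> badges p"
  obtains r lam al be where "c = badge r lam" "honest_rep p r lam al be"
  using assms unfolding badges_def by blast

lemma badge_in_badges: "honest_rep p r lam al be \<Longrightarrow> badge r lam \<in> badges p"
  unfolding badges_def by blast

lemma honest_rep_identity:
  "honest_rep p r lam al be \<Longrightarrow> \<forall>x y. p x y = (\<Sum>j<r. lam j * (al j * x + be j * y) ^ 6)"
  unfolding honest_rep_def by blast

(* Since q_l(x, -y) = - q_l(x, y), negating all coefficients and all be_j swaps
   the two entries of a badge. *)
lemma badges_q_swap: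
  assumes "(a, b) \<in> badges (q l)"
  shows "(b, a) \<in> badges (q l)"
proof -
  obtain r lam al be where ab: "(a, b) = badge r lam" and h: "honest_rep (q l) r lam al be"
    using assms by (rule badgesE)
  have "honest_rep (q l) r (\<lambda>j. - lam j) al (\<lambda>j. - be j)"
    unfolding honest_rep_def
  proof (intro conjI allI impI)
    fix x y
    have "q l x y = - q l x (- y)"
      unfolding q_def by algebra
    also have "\<dots> = (\<Sum>j<r. - lam j * (al j * x + - be j * y) ^ 6)"
      using honest_rep_identity[OF h] by (simp add: sum_negf[symmetric])
    finally show "q l x y = (\<Sum>j<r. - lam j * (al j * x + - be j * y) ^ 6)" .
  qed (use h in \<open>auto simp: honest_rep_def\<close>)
  moreover have "badge r (\<lambda>j. - lam j) = (b, a)"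
    using ab unfolding badge_def by auto
  ultimately show ?thesis
    by (metis badge_in_badges)
qed

definition indep_nodes :: "(real \<times> real) set \<Rightarrow> bool" where
  "indep_nodes N \<longleftrightarrow> (\<forall>u\<in>N. \<forall>v\<in>N. u \<noteq> v \<longrightarrow> fst u * snd v - fst v * snd u \<noteq> 0)"

lemma positive_terms_gt:
  assumes h: "honest_rep (q l) r lam al be"
    and wit: "\<And>N. finite N \<Longrightarrow> card N \<le> k \<Longrightarrow> indep_nodes N \<Longrightarrow>
                 \<exists>x. hankel l x > 0 \<and> (\<forall>(a, b)\<in>N. cubic x a b = 0)"
  shows "k < card {j. j < r \<and> lam j > 0}"
proof (rule ccontr)
  define S where "S = {j. j < r \<and> lam j > 0}"
  define N where "N = (\<lambda>j. (al j, be j)) ` S"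
  assume "\<not> k < card {j. j < r \<and> lam j > 0}"
  moreover have "card N \<le> card S"
    unfolding N_def by (rule card_image_le) (simp add: S_def)
  ultimately have "card N \<le> k"
    unfolding S_def by linarith
  moreover have "finite N"
    unfolding N_def S_def by simp
  moreover have "indep_nodes N"
    using h unfolding indep_nodes_def N_def S_def honest_rep_def by fastforce
  ultimately obtain x where "hankel l x > 0" and "\<forall>(a, b)\<in>N. cubic x a b = 0"
    using wit by blast
  then show False
    using positive_node_off_cubic[OF honest_rep_identity[OF h]] unfolding N_def S_def by fastforce
qed

lemma badges_q_lower_bound:
  assumes wit: "\<And>N. finite N \<Longrightarrow> card N \<le> k \<Longrightarrow> indep_nodes N \<Longrightarrow>
                 \<exists>x. hankel l x > 0 \<and> (\<forall>(a, b)\<in>N. cubic x a b = 0)"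
    and mem: "(a, b) \<in> badges (q l)"
  shows "k < a \<and> k < b"
proof -
  have fst_bound: "k < a" if "(a, b) \<in> badges (q l)" for a b
  proof -
    obtain r lam al be where "(a, b) = badge r lam" "honest_rep (q l) r lam al be"
      using \<open>(a, b) \<in> badges (q l)\<close> by (rule badgesE)
    then show ?thesis
      using positive_terms_gt[OF _ wit] unfolding badge_def by auto
  qed
  show ?thesis
    using fst_bound mem badges_q_swap[OF mem] by blast
qed

lemma hankel_all_ones: "l > -1 \<Longrightarrow> hankel l (\<lambda>_. 1) > 0"
  unfolding hankel_def by simp

lemma witness_in_plane:
  assumes "hankel l u > 0" "hankel l v > 0"
    and orth: "\<And>c d. hankel l (\<lambda>i. c * u i + d * v i) = c ^ 2 * hankel l u + d ^ 2 * hankel l v"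
  shows "\<exists>x. hankel l x > 0 \<and> cubic x a b = 0"
proof (cases "cubic u a b = 0")
  case True
  with assms(1) show ?thesis by blast
next
  case False
  define x where "x = (\<lambda>i. cubic v a b * u i + (- cubic u a b) * v i)"
  have "cubic x a b = 0"
    unfolding x_def cubic_def by algebra
  moreover have "hankel l x > 0"
    unfolding x_def orth using assms(1,2) False
    by (simp add: add_nonneg_pos)
  ultimately show ?thesis by blast
qed

(* Witness through one node for l > -1, l <> 1: the eigenvectors (1,1,1,1) and
   (1,1,-1,-1) (resp. (1,-1,-1,1)) span a positive plane of the Hankel form. *)
lemma witness_one_node:
  assumes "l > -1" "l \<noteq> 1"
  shows "\<exists>x. hankel l x > 0 \<and> cubic x a b = 0"
proof (cases "l < 1")
  case True
  show ?thesis
  proof (rule witness_in_plane[of l "\<lambda>_. 1" "\<lambda>i. if i < 2 then 1 else -1"])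
    show "hankel l (\<lambda>i. if i < 2 then 1 else -1) > 0"
      using True unfolding hankel_def by simp
  qed (use assms in \<open>simp_all add: hankel_def power2_eq_square algebra_simps\<close>)
next
  case False
  show ?thesis
  proof (rule witness_in_plane[of l "\<lambda>_. 1" "\<lambda>i. if i = 0 \<or> i = 3 then 1 else -1"])
    show "hankel l (\<lambda>i. if i = 0 \<or> i = 3 then 1 else -1) > 0"
      using False assms unfolding hankel_def by simp
  qed (use assms in \<open>simp_all add: hankel_def power2_eq_square algebra_simps\<close>)
qed

lemma binary_quadratic_positive_value:
  fixes P R S :: real
  assumes "P > 0 \<or> S > 0 \<or> R ^ 2 > 4 * P * S"
  shows "\<exists>c d. P * c ^ 2 + R * c * d + S * d ^ 2 > 0"
proof -
  consider "P > 0" | "S > 0" | "P = 0" "S \<le> 0" "R \<noteq> 0" | "P < 0" "R ^ 2 > 4 * P * S"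
    using assms by (cases "P = 0") force+
  then show ?thesis
  proof cases
    case 1
    then show ?thesis by (intro exI[of _ 1] exI[of _ 0]) simp
  next
    case 2
    then show ?thesis by (intro exI[of _ 0] exI[of _ 1]) simp
  next
    case 3
    then have "P * ((1 - S) / R) ^ 2 + R * ((1 - S) / R) * 1 + S * 1 ^ 2 = 1"
      by (simp add: field_simps)
    then show ?thesis by (intro exI[of _ "(1 - S) / R"] exI[of _ 1]) simp
  next
    case 4
    have "P * R ^ 2 + R * R * (-2 * P) + S * (-2 * P) ^ 2 = (- P) * (R ^ 2 - 4 * P * S)"
      by algebra
    moreover have "(- P) * (R ^ 2 - 4 * P * S) > 0"
      using 4 by (intro mult_pos_pos) auto
    ultimately show ?thesis by (intro exI[of _ R] exI[of _ "-2 * P"]) simp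
  qed
qed

(* Polynomial inequality behind the two-node witness; for v > 0 it is a sum of
   nonnegative terms in m = -l, d = w - 4v, e = u - 2v, using m >= 3/5. *)
lemma quadratic_in_w_positive:
  fixes l u v w :: real
  assumes l: "l \<le> -3/5" and "w \<ge> 0" "u + 2 * v \<ge> 0" "u - 2 * v \<ge> 0" "w > 4 * v"
  shows "l^2 * w^2 - (2*l*u + 4*v) * w + (u + 2*l*v)^2 > 0"
proof (cases "v \<le> 0")
  case True
  have "u \<ge> 0"
    using assms(3,4) by linarith
  with l have "l * u \<le> 0"
    by (simp add: mult_nonpos_nonneg)
  then have middle: "- (2*l*u + 4*v) * w \<ge> 0"
    using True \<open>w \<ge> 0\<close> by simp
  show ?thesis
  proof (cases "w > 0")
    case True
    then have "l^2 * w^2 > 0" using l by simp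
    moreover have "(u + 2*l*v)^2 \<ge> 0" by simp
    ultimately show ?thesis using middle by linarith
  next
    case False
    then have "w = 0" "v < 0" using \<open>w \<ge> 0\<close> \<open>w > 4 * v\<close> by auto
    moreover have "2 * l * v \<ge> 0" using \<open>v < 0\<close> l by (simp add: mult_nonpos_nonpos)
    ultimately have "u + 2 * l * v > 0" using \<open>u + 2 * v \<ge> 0\<close> by linarith
    then show ?thesis using \<open>w = 0\<close> by simp
  qed
next
  case False
  define m d e where "m = - l" "d = w - 4 * v" "e = u - 2 * v"
  have "m \<ge> 3/5" "v > 0" "d > 0" "e \<ge> 0"
    using l False assms(4,5) unfolding m_d_e_def by auto
  have "l^2 * w^2 - (2*l*u + 4*v) * w + (u + 2*l*v)^2 =
      4*v^2 * ((5*m - 3) * (m + 1)) + 4*v*d * ((2*m - 1) * (m + 1)) + 4*v*e * (m + 1) + (m*d + e)^2"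
    unfolding m_d_e_def by algebra
  moreover have "4*v^2 * ((5*m - 3) * (m + 1)) \<ge> 0" "4*v*d * ((2*m - 1) * (m + 1)) > 0"
    "4*v*e * (m + 1) \<ge> 0" "(m*d + e)^2 \<ge> 0"
    using \<open>m \<ge> 3/5\<close> \<open>v > 0\<close> \<open>d > 0\<close> \<open>e \<ge> 0\<close> by simp_all
  ultimately show ?thesis by linarith
qed

(* For l <= -3/5 the Hankel form restricted to the cubics divisible by a quadratic
   A a^2 + B a b + D b^2 with positive discriminant is indefinite. *)
lemma discriminant_positive:
  fixes A B D l :: real
  assumes l: "l \<le> -3/5" and disc: "B^2 > 4 * A * D"
  shows "(A^2 + D^2 + l * (2*A*D + B^2))^2 - 4 * (B * (A + l*D)) * (B * (D + l*A)) > 0"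
proof -
  have "(A^2 + D^2 + l * (2*A*D + B^2))^2 - 4 * (B * (A + l*D)) * (B * (D + l*A))
      = l^2 * (B^2)^2 - (2*l*(A^2 + D^2) + 4*(A*D)) * B^2 + (A^2 + D^2 + 2*l*(A*D))^2"
    by algebra
  moreover have "A^2 + D^2 + 2 * (A * D) = (A + D)^2" "A^2 + D^2 - 2 * (A * D) = (A - D)^2"
    by algebra+
  ultimately show ?thesis
    using quadratic_in_w_positive[OF l, of "B^2" "A^2 + D^2" "A * D"] disc by simp
qed

(* Witness through two independent nodes for l <= -3/5: multiply the quadratic vanishing
   at both nodes by a suitable linear form. *)
lemma witness_two_nodes:
  assumes l: "l \<le> -3/5" and indep: "a1 * b2 - a2 * b1 \<noteq> 0"
  shows "\<exists>x. hankel l x > 0 \<and> cubic x a1 b1 = 0 \<and> cubic x a2 b2 = 0"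
proof -
  define A where "A = b1 * b2"
  define B where "B = - (b1 * a2 + a1 * b2)"
  define D where "D = a1 * a2"
  have factor: "A * a^2 + B * a * b + D * b^2 = (b1 * a - a1 * b) * (b2 * a - a2 * b)" for a b
    unfolding A_def B_def D_def by algebra
  have "B^2 - 4 * A * D = (a1 * b2 - a2 * b1)^2"
    unfolding A_def B_def D_def by algebra
  moreover have "(a1 * b2 - a2 * b1)^2 > 0"
    using indep by simp
  ultimately have "B^2 > 4 * A * D"
    by linarith
  from discriminant_positive[OF l this]
  have "(A^2 + D^2 + l * (2*A*D + B^2))^2 > 4 * (B * (A + l*D)) * (B * (D + l*A))"
    by linarith
  then obtain c d where cd: "B * (A + l*D) * c^2 + (A^2 + D^2 + l * (2*A*D + B^2)) * c * d
      + B * (D + l*A) * d^2 > 0"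
    using binary_quadratic_positive_value by blast
  define x where "x = (\<lambda>i. [A * c, A * d + B * c, B * d + D * c, D * d] ! i)"
  have "hankel l x = 2 * (B * (A + l*D) * c^2 + (A^2 + D^2 + l * (2*A*D + B^2)) * c * d
      + B * (D + l*A) * d^2)"
    unfolding hankel_def x_def by simp algebra
  moreover have "cubic x a b = (A * a^2 + B * a * b + D * b^2) * (c * a + d * b)" for a b
    unfolding cubic_def x_def by simp algebra
  ultimately show ?thesis
    using cd unfolding factor by (intro exI[of _ x]) simp
qed

lemma card_le_1_subset_singleton:
  assumes "finite N" "card N \<le> 1"
  obtains u where "N \<subseteq> {u}"
proof (cases "N = {}")
  case True
  then show thesis by (intro that) simp
next
  case False
  then obtain u where "u \<in> N" by blast
  with assms have "N \<subseteq> {u}"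
    by (metis One_nat_def card_le_Suc0_iff_eq subsetI insertCI)
  then show thesis by (rule that)
qed

(* Witness through one node for l <= -3/5, by adding an independent partner node. *)
lemma witness_one_node_negative:
  assumes l: "l \<le> -3/5"
  shows "\<exists>x. hankel l x > 0 \<and> cubic x a b = 0"
proof (cases "a = 0 \<and> b = 0")
  case True
  obtain x where "hankel l x > 0"
    using witness_two_nodes[OF l, of 1 1 0 0] by auto
  with True show ?thesis
    unfolding cubic_def by auto
next
  case False
  then have "a * a - (- b) * b \<noteq> 0"
    by (simp add: sum_squares_eq_zero_iff)
  then show ?thesis
    using witness_two_nodes[OF l] by blast
qed

lemma badges_q_ge_1:
  assumes "l > -1" "(a, b) \<in> badges (q l)"
  shows "0 < a \<and> 0 < b"
proof (rule badges_q_lower_bound[OF _ assms(2)])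
  fix N :: "(real \<times> real) set"
  assume "finite N" "card N \<le> 0"
  then show "\<exists>x. hankel l x > 0 \<and> (\<forall>(a, b)\<in>N. cubic x a b = 0)"
    using hankel_all_ones[OF assms(1)] by auto
qed

lemma badges_q_ge_2:
  assumes "l > -1" "l \<noteq> 1" "(a, b) \<in> badges (q l)"
  shows "1 < a \<and> 1 < b"
proof (rule badges_q_lower_bound[OF _ assms(3)])
  fix N :: "(real \<times> real) set"
  assume "finite N" "card N \<le> 1"
  then obtain u where "N \<subseteq> {u}"
    by (rule card_le_1_subset_singleton)
  moreover obtain x where "hankel l x > 0" "cubic x (fst u) (snd u) = 0"
    using witness_one_node[OF assms(1,2)] by blast
  ultimately show "\<exists>x. hankel l x > 0 \<and> (\<forall>(a, b)\<in>N. cubic x a b = 0)"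
    by (intro exI[of _ x]) (cases u, auto)
qed

lemma badges_q_ge_3:
  assumes l: "l \<le> -3/5" and mem: "(a, b) \<in> badges (q l)"
  shows "2 < a \<and> 2 < b"
proof (rule badges_q_lower_bound[OF _ mem])
  fix N :: "(real \<times> real) set"
  assume N: "finite N" "card N \<le> 2" "indep_nodes N"
  show "\<exists>x. hankel l x > 0 \<and> (\<forall>(a, b)\<in>N. cubic x a b = 0)"
  proof (cases "card N = 2")
    case True
    then obtain u v where uv: "N = {u, v}" "u \<noteq> v"
      by (auto simp: card_2_iff)
    then have "fst u * snd v - fst v * snd u \<noteq> 0"
      using N(3) unfolding indep_nodes_def by blast
    then obtain x where "hankel l x > 0" "cubic x (fst u) (snd u) = 0" "cubic x (fst v) (snd v) = 0"
      using witness_two_nodes[OF l] by blast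
    with uv show ?thesis
      by (intro exI[of _ x]) (cases u, cases v, auto)
  next
    case False
    with N have "card N \<le> 1" by linarith
    with N obtain u where "N \<subseteq> {u}"
      using card_le_1_subset_singleton by blast
    moreover obtain x where "hankel l x > 0" "cubic x (fst u) (snd u) = 0"
      using witness_one_node_negative[OF l] by blast
    ultimately show ?thesis
      by (intro exI[of _ x]) (cases u, auto)
  qed
qed

(* An even quartic G(a^2, b^2) vanishing at two nodes with distinct squared ratios and
   satisfying g0 + l g2 + g4 = 0 (l <= 0) is zero: the 3 x 3 system has determinant
   (S T' - S' T) * (T T' + S S' - l (S T' + S' T)) <> 0. *)
lemma even_quartic_vanishes:
  fixes g0 g2 g4 l a b c d :: real
  assumes l: "l \<le> 0" and constraint: "g0 + l * g2 + g4 = 0"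
    and zero1: "g0 * a^4 + g2 * a^2 * b^2 + g4 * b^4 = 0"
    and zero2: "g0 * c^4 + g2 * c^2 * d^2 + g4 * d^4 = 0"
    and distinct: "a^2 * d^2 \<noteq> c^2 * b^2" and off_axes: "a * c \<noteq> 0 \<or> b * d \<noteq> 0"
  shows "g0 = 0 \<and> g2 = 0 \<and> g4 = 0"
proof -
  define S T S' T' where "S = a^2" "T = b^2" "S' = c^2" "T' = d^2"
  define K where "K = T * T' + S * S' - l * (S * T' + S' * T)"
  define \<Delta> where "\<Delta> = S * T' - S' * T"
  have "\<Delta> \<noteq> 0"
    using distinct unfolding \<Delta>_def S_T_S'_T'_def by auto
  have "S \<ge> 0" "T \<ge> 0" "S' \<ge> 0" "T' \<ge> 0"
    unfolding S_T_S'_T'_def by auto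
  then have "- l * (S * T' + S' * T) \<ge> 0" "T * T' \<ge> 0" "S * S' \<ge> 0"
    using l by (intro mult_nonneg_nonneg; simp)+
  moreover have "T * T' > 0 \<or> S * S' > 0"
    using off_axes unfolding S_T_S'_T'_def by (auto simp: power_mult_distrib[symmetric])
  ultimately have "K > 0"
    unfolding K_def by linarith
  have e1: "g0 * S^2 + g2 * S * T + g4 * T^2 = 0" and e2: "g0 * S'^2 + g2 * S' * T' + g4 * T'^2 = 0"
    using zero1 zero2 unfolding S_T_S'_T'_def by algebra+
  have "(\<Delta> * K) * g0 = 0" "(\<Delta> * K) * g2 = 0" "(\<Delta> * K) * g4 = 0"
    using e1 e2 constraint unfolding \<Delta>_def K_def by algebra+
  with \<open>\<Delta> \<noteq> 0\<close> \<open>K > 0\<close> show ?thesis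
    by simp
qed

(* Among three independent nodes, node 0 forms a pair as required above with node 1 or
   with node 2: the bad partners of node 0 are its reflection (a : -b) or, for an axis
   node, the other axis, and two bad partners would be proportional. *)
lemma separated_pair_among_three:
  fixes a0 b0 a1 b1 a2 b2 :: real
  assumes i01: "a0 * b1 - a1 * b0 \<noteq> 0" and i02: "a0 * b2 - a2 * b0 \<noteq> 0"
    and i12: "a1 * b2 - a2 * b1 \<noteq> 0"
  shows "(a0^2 * b1^2 \<noteq> a1^2 * b0^2 \<and> (a0 * a1 \<noteq> 0 \<or> b0 * b1 \<noteq> 0)) \<or>
         (a0^2 * b2^2 \<noteq> a2^2 * b0^2 \<and> (a0 * a2 \<noteq> 0 \<or> b0 * b2 \<noteq> 0))"
proof (rule ccontr)
  have reflected: "a0 * b = - (a * b0)" if "a0^2 * b^2 = a^2 * b0^2" "a0 * b - a * b0 \<noteq> 0" for a b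
  proof -
    have "(a0 * b - a * b0) * (a0 * b + a * b0) = 0"
      using that(1) by algebra
    with that(2) show ?thesis by simp
  qed
  have not_both_reflected: "\<not> (a0^2 * b1^2 = a1^2 * b0^2 \<and> a0^2 * b2^2 = a2^2 * b0^2)"
  proof
    assume "a0^2 * b1^2 = a1^2 * b0^2 \<and> a0^2 * b2^2 = a2^2 * b0^2"
    then have "a0 * b1 = - (a1 * b0)" "a0 * b2 = - (a2 * b0)"
      using reflected i01 i02 by blast+
    then have "a0 * (a1 * b2 - a2 * b1) = 0" "b0 * (a1 * b2 - a2 * b1) = 0"
      by algebra+
    with i01 i12 show False by simp
  qed
  assume "\<not> ?thesis"
  with not_both_reflected i01 i02 i12 show False
    by auto
qed

lemma quartic_of_product:
  fixes a0 b0 a1 b1 a2 b2 a3 b3 :: real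
  shows "\<exists>g. \<forall>a b. quartic g a b =
     (b0 * a - a0 * b) * (b1 * a - a1 * b) * (b2 * a - a2 * b) * (b3 * a - a3 * b)"
proof -
  define A1 B1 D1 where "A1 = b0 * b1" "B1 = - (b0 * a1 + a0 * b1)" "D1 = a0 * a1"
  define A2 B2 D2 where "A2 = b2 * b3" "B2 = - (b2 * a3 + a2 * b3)" "D2 = a2 * a3"
  define g where "g = (\<lambda>i. [A1 * A2, A1 * B2 + B1 * A2, A1 * D2 + B1 * B2 + D1 * A2,
                            B1 * D2 + D1 * B2, D1 * D2] ! i)"
  have "quartic g a b =
     (b0 * a - a0 * b) * (b1 * a - a1 * b) * (b2 * a - a2 * b) * (b3 * a - a3 * b)" for a b
    unfolding quartic_def g_def A1_B1_D1_def A2_B2_D2_def by simp algebra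
  then show ?thesis by blast
qed

lemma point_off_nodes:
  fixes al be :: "nat \<Rightarrow> real"
  assumes "\<And>j. j < r \<Longrightarrow> al j \<noteq> 0 \<or> be j \<noteq> 0"
  obtains t where "\<And>j. j < r \<Longrightarrow> be j - al j * t \<noteq> 0"
proof -
  obtain t :: real where t: "t \<notin> (\<lambda>j. be j / al j) ` {..<r}"
    using ex_new_if_finite[OF infinite_UNIV_char_0] by blast
  have "be j - al j * t \<noteq> 0" if "j < r" for j
  proof (cases "al j = 0")
    case True
    with assms that show ?thesis by simp
  next
    case False
    show ?thesis
    proof
      assume "be j - al j * t = 0"
      with False have "t = be j / al j"
        by (simp add: field_simps)
      with t that show False by auto
    qed
  qed
  then show thesis by (rule that)
qed

lemma honest_node_nonzero:
  assumes "honest_rep p r lam al be" "2 \<le> r" "j < r"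
  shows "al j \<noteq> 0 \<or> be j \<noteq> 0"
proof -
  obtain i where "i < r" "i \<noteq> j"
    using assms(2,3) by (metis One_nat_def less_2_cases_iff not_less_eq_eq numeral_2_eq_2 order_less_le_trans)
  with assms(1,3) have "al i * be j - al j * be i \<noteq> 0"
    unfolding honest_rep_def by blast
  then show ?thesis by auto
qed

lemma quartic_through_nodes_even:
  assumes "\<forall>x y. q l x y = (\<Sum>j<r. lam j * (al j * x + be j * y) ^ 6)"
    and "\<And>j. j < r \<Longrightarrow> quartic g (al j) (be j) = 0" and "\<bar>l\<bar> < 1"
  shows "g 1 = 0" "g 3 = 0" "g 0 + l * g 2 + g 4 = 0"
proof -
  note apolar = quartic_through_nodes[OF assms(1,2)]
  have "g 1 * (1 - l^2) = 0"
    using apolar(1,3) by algebra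
  moreover have "1 - l^2 > 0"
    using assms(3) by (simp add: abs_square_less_1)
  ultimately show "g 1 = 0" "g 3 = 0"
    using apolar(3) by simp_all
  show "g 0 + l * g 2 + g 4 = 0"
    by (rule apolar(2))
qed

(* For -1 < l <= 0 there is no honest representation with exactly four terms: the
   product of the four linear forms would vanish identically. *)
lemma no_honest_rep_with_four_terms:
  assumes h: "honest_rep (q l) 4 lam al be" and l: "-1 < l" "l \<le> 0"
  shows False
proof -
  obtain g where g: "\<And>a b. quartic g a b = (be 0 * a - al 0 * b) * (be 1 * a - al 1 * b)
      * (be 2 * a - al 2 * b) * (be 3 * a - al 3 * b)"
    using quartic_of_product by blast
  have on_nodes: "quartic g (al j) (be j) = 0" if "j < 4" for j
  proof -
    from that have "j = 0 \<or> j = 1 \<or> j = 2 \<or> j = 3" by arith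
    then show ?thesis
      unfolding g by (elim disjE) (simp_all add: mult.commute)
  qed
  have "\<bar>l\<bar> < 1" using l by simp
  note even_coeffs = quartic_through_nodes_even[OF honest_rep_identity[OF h] on_nodes this]
  have even: "g 0 * al j^4 + g 2 * al j^2 * be j^2 + g 4 * be j^4 = 0" if "j < 4" for j
    using on_nodes[OF that] even_coeffs(1,2) unfolding quartic_def by simp
  have "al 0 * be 1 - al 1 * be 0 \<noteq> 0" "al 0 * be 2 - al 2 * be 0 \<noteq> 0"
    "al 1 * be 2 - al 2 * be 1 \<noteq> 0"
    using h unfolding honest_rep_def by simp_all
  from separated_pair_among_three[OF this] have "g 0 = 0 \<and> g 2 = 0 \<and> g 4 = 0"
  proof (elim disjE)
    assume "al 0^2 * be 1^2 \<noteq> al 1^2 * be 0^2 \<and> (al 0 * al 1 \<noteq> 0 \<or> be 0 * be 1 \<noteq> 0)"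
    then show ?thesis
      using even_quartic_vanishes[OF l(2) even_coeffs(3) even[of 0] even[of 1]] by simp
  next
    assume "al 0^2 * be 2^2 \<noteq> al 2^2 * be 0^2 \<and> (al 0 * al 2 \<noteq> 0 \<or> be 0 * be 2 \<noteq> 0)"
    then show ?thesis
      using even_quartic_vanishes[OF l(2) even_coeffs(3) even[of 0] even[of 2]] by simp
  qed
  moreover obtain t where "\<And>j. j < 4 \<Longrightarrow> be j - al j * t \<noteq> 0"
    using point_off_nodes honest_node_nonzero[OF h] by (metis le_add2 numeral_Bit0)
  ultimately show False
    using g[of 1 t] even_coeffs(1,2) unfolding quartic_def by simp
qed

lemma sum_lessThan_double:
  fixes f :: "nat \<Rightarrow> 'a::comm_monoid_add"
  shows "(\<Sum>j<n + n. f j) = (\<Sum>j<n. f j) + (\<Sum>j<n. f (j + n))"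
proof -
  have "(\<Sum>j<n + n. f j) = (\<Sum>j\<in>{0..<n}. f j) + (\<Sum>j\<in>{0 + n..<n + n}. f j)"
    using sum.atLeastLessThan_concat[of 0 n "n + n" f] by (simp add: atLeast0LessThan)
  also have "\<dots> = (\<Sum>j<n. f j) + (\<Sum>j<n. f (j + n))"
    by (simp only: sum.shift_bounds_nat_ivl atLeast0LessThan)
  finally show ?thesis .
qed

lemma antipodal_values_inj:
  fixes u :: "nat \<Rightarrow> real"
  assumes nonzero: "\<And>i. i < n \<Longrightarrow> u i \<noteq> 0"
    and distinct: "\<And>i j. i < n \<Longrightarrow> j < n \<Longrightarrow> u i ^ 2 = u j ^ 2 \<Longrightarrow> i = j"
  shows "inj_on (\<lambda>j. if j < n then u j else - u (j - n)) {..<n + n}"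
proof (rule inj_onI)
  fix i j assume ij: "i \<in> {..<n + n}" "j \<in> {..<n + n}"
    and eq: "(if i < n then u i else - u (i - n)) = (if j < n then u j else - u (j - n))"
  define i' j' where "i' = (if i < n then i else i - n)" "j' = (if j < n then j else j - n)"
  have "i' < n" "j' < n"
    using ij unfolding i'_j'_def by auto
  from arg_cong[OF eq, of "\<lambda>z. z ^ 2"] have "u i' ^ 2 = u j' ^ 2"
    unfolding i'_j'_def by (auto split: if_splits)
  then have "i' = j'"
    using distinct \<open>i' < n\<close> \<open>j' < n\<close> by blast
  moreover have "(i < n) = (j < n)"
  proof (rule ccontr)
    assume "(i < n) \<noteq> (j < n)"
    with eq \<open>i' = j'\<close> have "u i' = 0"
      unfolding i'_j'_def by (auto split: if_splits)
    with nonzero \<open>i' < n\<close> show False by blast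
  qed
  ultimately show "i = j"
    unfolding i'_j'_def by (auto split: if_splits)
qed

lemma antipodal_pairs_badge:
  fixes c u :: "nat \<Rightarrow> real"
  assumes pos: "\<And>i. i < n \<Longrightarrow> c i > 0" and nonzero: "\<And>i. i < n \<Longrightarrow> u i \<noteq> 0"
    and distinct: "\<And>i j. i < n \<Longrightarrow> j < n \<Longrightarrow> u i ^ 2 = u j ^ 2 \<Longrightarrow> i = j"
    and p: "\<And>x y. p x y = (\<Sum>i<n. c i * ((u i * x + y) ^ 6 - (- u i * x + y) ^ 6))"
  shows "(n, n) \<in> badges p"
proof -
  define lam where "lam j = (if j < n then c j else - c (j - n))" for j
  define al where "al = (\<lambda>j. if j < n then u j else - u (j - n))"
  have inj: "inj_on al {..<n + n}"
    unfolding al_def using nonzero distinct by (rule antipodal_values_inj)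
  have sign: "lam j > 0 \<longleftrightarrow> j < n" "lam j < 0 \<longleftrightarrow> \<not> j < n" if "j < n + n" for j
  proof -
    from that have "j - n < n" by arith
    with that pos[of j] pos[of "j - n"] show "lam j > 0 \<longleftrightarrow> j < n" "lam j < 0 \<longleftrightarrow> \<not> j < n"
      unfolding lam_def by auto
  qed
  have "honest_rep p (n + n) lam al (\<lambda>_. 1)"
    unfolding honest_rep_def
  proof (intro conjI allI impI)
    fix j assume "j < n + n"
    with sign show "lam j \<noteq> 0" by force
  next
    fix i j assume "i < n + n" "j < n + n" "i \<noteq> j"
    with inj show "al i * 1 - al j * 1 \<noteq> 0"
      unfolding inj_on_def by auto
  next
    fix x y
    show "p x y = (\<Sum>j<n + n. lam j * (al j * x + 1 * y) ^ 6)"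
      unfolding sum_lessThan_double p
      by (simp add: lam_def al_def sum.distrib[symmetric] right_diff_distrib)
  qed
  moreover have "{j. j < n + n \<and> lam j > 0} = {..<n}" "{j. j < n + n \<and> lam j < 0} = {n..<n + n}"
    using sign by auto
  then have "badge (n + n) lam = (n, n)"
    unfolding badge_def by simp
  ultimately show ?thesis
    by (metis badge_in_badges)
qed

(* A measure for q_l: points z_i > 0 with weights w_i <> 0 and moments 1, l, 1 give
   (n, n), since each antipodal pair contributes 2 c u (6 x y^5 + 20 u^2 x^3 y^3 + 6 u^4 x^5 y). *)
lemma badge_from_moments:
  fixes z w :: "nat \<Rightarrow> real"
  assumes pos: "\<And>i. i < n \<Longrightarrow> z i > 0" and nonzero: "\<And>i. i < n \<Longrightarrow> w i \<noteq> 0"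
    and inj: "inj_on z {..<n}"
    and m0: "(\<Sum>i<n. w i) = 1" and m1: "(\<Sum>i<n. w i * z i) = l"
    and m2: "(\<Sum>i<n. w i * z i ^ 2) = 1"
  shows "(n, n) \<in> badges (q l)"
proof -
  define u where "u i = sgn (w i) * sqrt (z i)" for i
  define c where "c i = \<bar>w i\<bar> / (2 * sqrt (z i))" for i
  have u_sq: "u i ^ 2 = z i" if "i < n" for i
    using pos[OF that] nonzero[OF that] unfolding u_def by (simp add: power_mult_distrib sgn_if)
  have pair_term: "c i * ((u i * x + y) ^ 6 - (- u i * x + y) ^ 6)
      = w i * (6 * x * y^5 + 20 * z i * x^3 * y^3 + 6 * z i ^ 2 * x^5 * y)" if "i < n" for i x y
  proof -
    have "(u i * x + y) ^ 6 - (- u i * x + y) ^ 6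
        = 2 * u i * (6 * x * y^5 + 20 * u i ^ 2 * x^3 * y^3 + 6 * (u i ^ 2) ^ 2 * x^5 * y)"
      by algebra
    moreover have "c i * (2 * u i) = w i"
      using pos[OF that] unfolding c_def u_def by (simp add: abs_mult_sgn)
    ultimately show ?thesis
      using u_sq[OF that] by algebra
  qed
  show ?thesis
  proof (rule antipodal_pairs_badge[of n c u])
    fix x y
    have "(\<Sum>i<n. c i * ((u i * x + y) ^ 6 - (- u i * x + y) ^ 6))
        = (\<Sum>i<n. w i * (6 * x * y^5 + 20 * z i * x^3 * y^3 + 6 * z i ^ 2 * x^5 * y))"
      by (intro sum.cong refl pair_term) simp
    also have "\<dots> = (\<Sum>i<n. 6 * x * y^5 * w i + 20 * x^3 * y^3 * (w i * z i)
        + 6 * x^5 * y * (w i * z i ^ 2))"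
      by (rule sum.cong) (simp_all add: algebra_simps)
    also have "\<dots> = 6 * x * y^5 * (\<Sum>i<n. w i) + 20 * x^3 * y^3 * (\<Sum>i<n. w i * z i)
        + 6 * x^5 * y * (\<Sum>i<n. w i * z i ^ 2)"
      by (simp add: sum.distrib sum_distrib_left)
    finally show "q l x y = (\<Sum>i<n. c i * ((u i * x + y) ^ 6 - (- u i * x + y) ^ 6))"
      unfolding m0 m1 m2 q_def by (simp add: algebra_simps)
  next
    fix i j assume "i < n" "j < n" "u i ^ 2 = u j ^ 2"
    with inj show "i = j"
      using u_sq by (auto simp: inj_on_def)
  next
    fix i assume "i < n"
    with pos[OF this] nonzero[OF this] show "c i > 0" "u i \<noteq> 0"
      unfolding c_def u_def by (auto simp: sgn_eq_0_iff)
  qed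
qed

lemma badge_11: "(1, 1) \<in> badges (q 1)"
  by (rule badge_from_moments[of 1 "\<lambda>_. 1" "\<lambda>_. 1"]) (auto simp: inj_on_def)

(* A two-point measure: the weights are forced by the first two moments, and the third
   moment equals 1 exactly when (z0 - l) (z1 - l) = l^2 - 1. *)
lemma badge_22_from_two_points:
  assumes "z0 > 0" "z1 > 0" "z0 \<noteq> z1" "z0 \<noteq> l" "z1 \<noteq> l"
    and product: "(z0 - l) * (z1 - l) = l^2 - 1"
  shows "(2, 2) \<in> badges (q l)"
proof (rule badge_from_moments)
  define w0 w1 where "w0 = (l - z1) / (z0 - z1)" "w1 = (z0 - l) / (z0 - z1)"
  have "z0 - z1 \<noteq> 0" using assms by simp
  then have w: "(z0 - z1) * w0 = l - z1" "(z0 - z1) * w1 = z0 - l"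
    unfolding w0_w1_def by simp_all
  have "(z0 - z1) * (w0 + w1 - 1) = 0" "(z0 - z1) * (w0 * z0 + w1 * z1 - l) = 0"
    "(z0 - z1) * (w0 * z0^2 + w1 * z1^2 - 1) = 0"
    using w product by algebra+
  with \<open>z0 - z1 \<noteq> 0\<close> have "w0 + w1 = 1" "w0 * z0 + w1 * z1 = l" "w0 * z0^2 + w1 * z1^2 = 1"
    by simp_all
  then show "(\<Sum>i<2. [w0, w1] ! i) = 1" "(\<Sum>i<2. [w0, w1] ! i * [z0, z1] ! i) = l"
    "(\<Sum>i<2. [w0, w1] ! i * ([z0, z1] ! i)^2) = 1"
    by (simp_all add: eval_nat_numeral)
  show "\<And>i. i < 2 \<Longrightarrow> [w0, w1] ! i \<noteq> 0"
    using assms \<open>z0 - z1 \<noteq> 0\<close> unfolding w0_w1_def by (auto simp: less_2_cases_iff)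
  show "\<And>i. i < 2 \<Longrightarrow> [z0, z1] ! i > 0" "inj_on (\<lambda>i. [z0, z1] ! i) {..<2}"
    using assms by (auto simp: less_2_cases_iff inj_on_def)
qed

lemma badge_22:
  assumes l: "l > 0" "l \<noteq> 1"
  shows "(2, 2) \<in> badges (q l)"
proof -
  define z0 z1 where "z0 = 2 * l + 1 / l" "z1 = 2 * l^3 / (l^2 + 1)"
  have "l^2 \<noteq> 1"
    using l by (simp add: power2_eq_1_iff)
  have "l^2 + 1 > 0"
    using zero_le_power2[of l] by linarith
  have shift0: "z0 - l = (l^2 + 1) / l"
    unfolding z0_z1_def using l by (simp add: field_simps power2_eq_square)
  have shift1: "z1 - l = l * (l^2 - 1) / (l^2 + 1)"
    unfolding z0_z1_def using \<open>l^2 + 1 > 0\<close> by (simp add: field_simps) algebra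
  have "2 * l^3 < 2 * l * (l^2 + 1)"
    using l by (simp add: algebra_simps power3_eq_cube power2_eq_square)
  then have "z1 < 2 * l"
    unfolding z0_z1_def using \<open>l^2 + 1 > 0\<close> by (simp add: divide_less_eq)
  moreover have "2 * l < z0"
    unfolding z0_z1_def using l by simp
  moreover have "z0 \<noteq> l" "z1 \<noteq> l"
    using shift0 shift1 l \<open>l^2 \<noteq> 1\<close> \<open>l^2 + 1 > 0\<close> by auto
  moreover have "(z0 - l) * (z1 - l) = l^2 - 1"
    unfolding shift0 shift1 using l \<open>l^2 + 1 > 0\<close> by simp
  moreover have "z1 > 0"
    unfolding z0_z1_def using l \<open>l^2 + 1 > 0\<close> by simp
  ultimately show ?thesis
    by (intro badge_22_from_two_points[of z0 z1]) auto
qed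

lemma badge_33:
  assumes "l < 1"
  shows "(3, 3) \<in> badges (q l)"
proof (rule badge_from_moments[of 3 "\<lambda>i. real i + 1"
    "\<lambda>i. [1 + 5/2 * (1 - l), -4 * (1 - l), 3/2 * (1 - l)] ! i"])
  show "\<And>i. i < 3 \<Longrightarrow> [1 + 5/2 * (1 - l), -4 * (1 - l), 3/2 * (1 - l)] ! i \<noteq> 0"
    using assms by (auto simp: eval_nat_numeral less_Suc_eq field_simps)
  show "inj_on (\<lambda>i. real i + 1) {..<3}"
    by (auto simp: inj_on_def)
qed (simp_all add: eval_nat_numeral field_simps)

(* The symmetric sextic spanned by a reciprocal pair of sixth powers, parametrized by
   p = t + 1/t. *)
definition pair_sextic :: "real \<Rightarrow> real \<Rightarrow> real \<Rightarrow> real" where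
  "pair_sextic p x y = (p^3 - 3*p) * (x^6 + y^6) + 6 * (p^2 - 2) * (x^5*y + x*y^5)
     + 15 * p * (x^4*y^2 + x^2*y^4) + 40 * x^3*y^3"

lemma pair_sextic_sum:
  assumes "t \<noteq> 0"
  shows "(x + t*y)^6 + (t*x + y)^6 = t^3 * pair_sextic (t + 1/t) x y"
proof -
  have "t * (1/t) = 1" using assms by simp
  then show ?thesis
    unfolding pair_sextic_def by algebra
qed

lemma square_gt_4: "\<bar>p :: real\<bar> > 2 \<Longrightarrow> p^2 - 4 > 0"
  using power_strict_mono[of 2 "\<bar>p\<bar>" 2] by simp

lemma reciprocal_sum_root:
  fixes p :: real
  assumes "\<bar>p\<bar> > 2"
  obtains t where "t \<noteq> 0" "t + 1/t = p" "t^2 \<noteq> 1"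
proof -
  define s where "s = sqrt (p^2 - 4)"
  define t where "t = (p + s) / 2"
  have "s^2 = p^2 - 4"
    unfolding s_def using square_gt_4[OF assms] by simp
  then have "t * t - p * t + 1 = 0"
    unfolding t_def by (simp add: field_simps power2_eq_square)
  moreover from this have "t \<noteq> 0"
    by auto
  ultimately have "t + 1/t = p"
    by (simp add: field_simps)
  moreover have "t^2 \<noteq> 1"
  proof
    assume "t^2 = 1"
    then have "t = 1 \<or> t = -1" by (simp add: power2_eq_1_iff)
    with \<open>t + 1/t = p\<close> assms show False by auto
  qed
  ultimately show thesis
    using \<open>t \<noteq> 0\<close> by (intro that)
qed

(* Solving the 4 x 4 linear system for the symmetric sextic q_l in the basis
   (x + y)^6, pair_sextic p, pair_sextic r (under the compatibility condition on p, r). *)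
lemma pair_sextic_interpolation:
  fixes l p r c0 d1 d2 :: real
  assumes nz: "p \<noteq> 2" "r \<noteq> 2" "p \<noteq> r" "p \<noteq> 0" "r \<noteq> 0"
    and constraint: "(1 + l) * (p + r + 2) + l * p * r = 0"
    and h0: "c0 * ((p - 2) * (r - 2)) = -(1 + l) * (p + r)"
    and h1: "d1 * ((p - r) * (p - 2) * p) = -(1 + l) * (r + 2)"
    and h2: "d2 * ((p - r) * (r - 2) * r) = (1 + l) * (p + 2)"
  shows "q l x y = c0 * (x + y)^6 + d1 * pair_sextic p x y + d2 * pair_sextic r x y"
proof -
  define N where "N = (p - 2) * (r - 2) * (p - r) * p * r"
  have "N \<noteq> 0" unfolding N_def using nz by simp
  have "N * (c0 + d1 * (p^3 - 3*p) + d2 * (r^3 - 3*r)) = 0"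
    "N * (c0 + d1 * (p^2 - 2) + d2 * (r^2 - 2) - 1) = 0"
    "N * (c0 + d1 * p + d2 * r) = 0" "N * (c0 + 2 * d1 + 2 * d2 - l) = 0"
    unfolding N_def using h0 h1 h2 constraint by algebra+
  with \<open>N \<noteq> 0\<close> have "c0 + d1 * (p^3 - 3*p) + d2 * (r^3 - 3*r) = 0"
    "c0 + d1 * (p^2 - 2) + d2 * (r^2 - 2) = 1" "c0 + d1 * p + d2 * r = 0" "c0 + 2 * d1 + 2 * d2 = l"
    by simp_all
  then show ?thesis
    unfolding q_def pair_sextic_def by algebra
qed

lemma q_pair_sextic_decomposition:
  fixes l p r :: real
  assumes p: "\<bar>p\<bar> > 2" and r: "\<bar>r\<bar> > 2" and "p \<noteq> r" "p + r \<noteq> 0" and l: "l > -1"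
    and constraint: "(1 + l) * (p + r + 2) + l * p * r = 0"
  obtains c0 d1 d2 where "c0 \<noteq> 0" "d1 * d2 * p * r < 0"
    "\<And>x y. q l x y = c0 * (x + y)^6 + d1 * pair_sextic p x y + d2 * pair_sextic r x y"
proof -
  have nz: "p - 2 \<noteq> 0" "r - 2 \<noteq> 0" "p - r \<noteq> 0" "p \<noteq> 0" "r \<noteq> 0" "1 + l \<noteq> 0"
    using assms by auto
  define c0 where "c0 = -(1 + l) * (p + r) / ((p - 2) * (r - 2))"
  define d1 where "d1 = -(1 + l) * (r + 2) / ((p - r) * (p - 2) * p)"
  define d2 where "d2 = (1 + l) * (p + 2) / ((p - r) * (r - 2) * r)"
  have h0: "c0 * ((p - 2) * (r - 2)) = -(1 + l) * (p + r)"
    and h1: "d1 * ((p - r) * (p - 2) * p) = -(1 + l) * (r + 2)"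
    and h2: "d2 * ((p - r) * (r - 2) * r) = (1 + l) * (p + 2)"
    unfolding c0_def d1_def d2_def using nz by simp_all
  have "c0 \<noteq> 0"
    unfolding c0_def using nz assms(4) by simp
  moreover have "d1 * d2 * p * r < 0"
  proof -
    define X Y Z where "X = d1 * d2 * p * r" "Y = (p - r)^2 * (p - 2)^2 * (r - 2)^2"
      "Z = (1 + l)^2 * (p^2 - 4) * (r^2 - 4)"
    have "X * Y = - Z"
      unfolding X_Y_Z_def using h1 h2 by algebra
    moreover have "Z > 0" "Y > 0"
      unfolding X_Y_Z_def using square_gt_4[OF p] square_gt_4[OF r] nz by simp_all
    ultimately have "X < 0"
      using mult_nonneg_nonneg[of X Y] by linarith
    then show ?thesis
      unfolding X_Y_Z_def .
  qed
  moreover note pair_sextic_interpolation[OF _ _ _ _ _ constraint h0 h1 h2]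
  ultimately show thesis
    using that nz by auto
qed

lemma card_filter_lessThan: "card {j. j < (n::nat) \<and> P j} = (\<Sum>j<n. of_bool (P j))"
proof -
  have "{j. j < n \<and> P j} = {..<n} \<inter> {j. P j}" by auto
  then show ?thesis by simp
qed

lemma sum_lessThan_5: "(\<Sum>j<5. f j) = f 0 + f 1 + f 2 + f 3 + (f (4::nat) :: 'a::comm_monoid_add)"
  by (simp add: eval_nat_numeral)

lemma badge_of_five_coefficients:
  fixes c0 c1 c2 :: real
  assumes "c0 \<noteq> 0" "c1 * c2 < 0"
  shows "badge 5 (\<lambda>j. [c0, c1, c1, c2, c2] ! j) \<in> {(3, 2), (2, 3)}"
proof -
  have "badge 5 (\<lambda>j. [c0, c1, c1, c2, c2] ! j) =
      (of_bool (c0 > 0) + 2 * of_bool (c1 > 0) + 2 * of_bool (c2 > 0),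
       of_bool (c0 < 0) + 2 * of_bool (c1 < 0) + 2 * of_bool (c2 < 0))"
    unfolding badge_def card_filter_lessThan sum_lessThan_5 by simp
  moreover have "(c1 > 0 \<and> c2 < 0) \<or> (c1 < 0 \<and> c2 > 0)" "c0 > 0 \<or> c0 < 0"
    using assms by (auto simp: mult_less_0_iff)
  ultimately show ?thesis
    by auto
qed

(* Rescaling d_i to c_i = d_i / t_i^3 keeps the sign of d1 d2 p r, since t p = t^2 + 1 > 0. *)
lemma reciprocal_scaling_sign:
  fixes t1 t2 p r d1 d2 :: real
  assumes t: "t1 \<noteq> 0" "t2 \<noteq> 0" "t1 + 1/t1 = p" "t2 + 1/t2 = r" and sign: "d1 * d2 * p * r < 0"
  shows "(d1 / t1^3) * (d2 / t2^3) < 0"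
proof -
  have "t1 * p = t1^2 + 1" "t2 * r = t2^2 + 1"
    using t by (auto simp: field_simps power2_eq_square)
  then have "(t1 * t2)^4 * (t1 * p) * (t2 * r) > 0"
    using t(1,2) by (simp add: add_nonneg_pos)
  moreover have "((d1 / t1^3) * (d2 / t2^3)) * ((t1 * t2)^4 * (t1 * p) * (t2 * r))
      = (d1 * d2 * p * r) * (t1 * t2)^2"
    using t(1,2) by (simp add: field_simps) algebra
  moreover have "(d1 * d2 * p * r) * (t1 * t2)^2 < 0"
    using sign t(1,2) by (simp add: mult_neg_pos)
  ultimately show ?thesis
    by (metis mult_less_0_iff order_less_asym)
qed

lemma five_term_honest_rep:
  fixes c0 c1 c2 t1 t2 :: real
  assumes "c0 \<noteq> 0" "c1 \<noteq> 0" "c2 \<noteq> 0" "t1^2 \<noteq> 1" "t2^2 \<noteq> 1" "t1 \<noteq> t2" "t1 * t2 \<noteq> 1"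
    and p: "\<And>x y. p x y = c0 * (x + y)^6 + c1 * ((x + t1*y)^6 + (t1*x + y)^6)
                                         + c2 * ((x + t2*y)^6 + (t2*x + y)^6)"
  shows "honest_rep p 5 (\<lambda>j. [c0, c1, c1, c2, c2] ! j) (\<lambda>j. [1, 1, t1, 1, t2] ! j)
                        (\<lambda>j. [1, t1, 1, t2, 1] ! j)"
  unfolding honest_rep_def
proof (intro conjI allI impI)
  fix j :: nat assume "j < 5"
  then show "[c0, c1, c1, c2, c2] ! j \<noteq> 0"
    using assms(1-3) by (auto simp: less_Suc_eq eval_nat_numeral)
next
  have "t1 \<noteq> 1" "t2 \<noteq> 1" "t1 * t1 \<noteq> 1" "t2 * t2 \<noteq> 1"
    using assms(4,5) by (auto simp: power2_eq_square)
  fix i j :: nat assume "i < 5" "j < 5" "i \<noteq> j"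
  then show "[1, 1, t1, 1, t2] ! i * [1, t1, 1, t2, 1] ! j - [1, 1, t1, 1, t2] ! j * [1, t1, 1, t2, 1] ! i \<noteq> 0"
    using \<open>t1 \<noteq> 1\<close> \<open>t2 \<noteq> 1\<close> \<open>t1 * t1 \<noteq> 1\<close> \<open>t2 * t2 \<noteq> 1\<close> assms(6,7)
    by (auto simp: less_Suc_eq eval_nat_numeral mult.commute)
next
  fix x y
  show "p x y = (\<Sum>j<5. [c0, c1, c1, c2, c2] ! j * ([1, 1, t1, 1, t2] ! j * x + [1, t1, 1, t2, 1] ! j * y) ^ 6)"
    unfolding sum_lessThan_5 p by (simp add: algebra_simps)
qed

lemma five_term_badge:
  fixes l p r :: real
  assumes p: "\<bar>p\<bar> > 2" and r: "\<bar>r\<bar> > 2" and "p \<noteq> r" "p + r \<noteq> 0" "l > -1"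
    and constraint: "(1 + l) * (p + r + 2) + l * p * r = 0"
  shows "(3, 2) \<in> badges (q l) \<or> (2, 3) \<in> badges (q l)"
proof -
  obtain c0 d1 d2 where "c0 \<noteq> 0" and sign: "d1 * d2 * p * r < 0"
    and decomposition: "\<And>x y. q l x y = c0 * (x + y)^6 + d1 * pair_sextic p x y + d2 * pair_sextic r x y"
    using q_pair_sextic_decomposition[OF assms] by blast
  obtain t1 where t1: "t1 \<noteq> 0" "t1 + 1/t1 = p" "t1^2 \<noteq> 1"
    using reciprocal_sum_root[OF p] by blast
  obtain t2 where t2: "t2 \<noteq> 0" "t2 + 1/t2 = r" "t2^2 \<noteq> 1"
    using reciprocal_sum_root[OF r] by blast
  have "t1 \<noteq> t2"
    using t1 t2 \<open>p \<noteq> r\<close> by auto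
  have "t1 * t2 \<noteq> 1"
  proof
    assume "t1 * t2 = 1"
    then have "t2 = 1/t1" "1/t2 = t1"
      using t1(1) t2(1) by (simp_all add: field_simps)
    with t1(2) t2(2) \<open>p \<noteq> r\<close> show False by simp
  qed
  define c1 c2 where "c1 = d1 / t1^3" "c2 = d2 / t2^3"
  have "c1 * c2 < 0"
    unfolding c1_c2_def using reciprocal_scaling_sign[OF t1(1) t2(1) t1(2) t2(2) sign] .
  have "q l x y = c0 * (x + y)^6 + c1 * ((x + t1*y)^6 + (t1*x + y)^6) + c2 * ((x + t2*y)^6 + (t2*x + y)^6)"
    for x y
    unfolding decomposition pair_sextic_sum[OF t1(1)] pair_sextic_sum[OF t2(1)] t1(2) t2(2) c1_c2_def
    using t1(1) t2(1) by simp
  with \<open>c0 \<noteq> 0\<close> \<open>c1 * c2 < 0\<close> t1(3) t2(3) \<open>t1 \<noteq> t2\<close> \<open>t1 * t2 \<noteq> 1\<close>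
  have "honest_rep (q l) 5 (\<lambda>j. [c0, c1, c1, c2, c2] ! j) (\<lambda>j. [1, 1, t1, 1, t2] ! j)
                          (\<lambda>j. [1, t1, 1, t2, 1] ! j)"
    by (intro five_term_honest_rep) auto
  moreover have "badge 5 (\<lambda>j. [c0, c1, c1, c2, c2] ! j) \<in> {(3, 2), (2, 3)}"
    by (rule badge_of_five_coefficients[OF \<open>c0 \<noteq> 0\<close> \<open>c1 * c2 < 0\<close>])
  ultimately show ?thesis
    using badge_in_badges by fastforce
qed

(* Parameters for -3/5 < l <= 0: (p, r) = (3, -5) for l = 0, and
   p = -(3 + l)/(2 l), r = -3 (1 + l)/l (both > 2 exactly when l > -3/5) for l < 0. *)
lemma badges_32_and_23:
  assumes l: "-3/5 < l" "l \<le> 0"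
  shows "(3, 2) \<in> badges (q l) \<and> (2, 3) \<in> badges (q l)"
proof -
  have "(3, 2) \<in> badges (q l) \<or> (2, 3) \<in> badges (q l)"
  proof (cases "l = 0")
    case True
    then show ?thesis
      using five_term_badge[of 3 "-5" l] by simp
  next
    case False
    with l have "l < 0" by simp
    define p r where "p = - (3 + l) / (2 * l)" "r = - 3 * (1 + l) / l"
    have "p > 2" "r > 2"
      unfolding p_r_def using l \<open>l < 0\<close> by (simp_all add: less_divide_eq)
    moreover have "p \<noteq> r"
    proof
      have "2 * l * p = - (3 + l)" "l * r = - 3 * (1 + l)"
        unfolding p_r_def using \<open>l < 0\<close> by simp_all
      moreover assume "p = r"
      ultimately have "- (3 + l) = 2 * (- 3 * (1 + l))"
        by (metis mult.assoc)
      with l show False by simp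
    qed
    moreover have "(1 + l) * (p + r + 2) + l * p * r = 0"
      unfolding p_r_def using \<open>l < 0\<close> by (simp add: field_simps)
    ultimately show ?thesis
      using five_term_badge[of p r l] l by simp
  qed
  then show ?thesis
    using badges_q_swap by blast
qed

lemma badge_card_sum:
  assumes "honest_rep p r lam al be"
  shows "fst (badge r lam) + snd (badge r lam) = r"
proof -
  have "{j. j < r \<and> lam j > 0} \<union> {j. j < r \<and> lam j < 0} = {..<r}"
    using assms unfolding honest_rep_def by (auto simp: linorder_neq_iff)
  moreover have "card ({j. j < r \<and> lam j > 0} \<union> {j. j < r \<and> lam j < 0}) =
      card {j. j < r \<and> lam j > 0} + card {j. j < r \<and> lam j < 0}"
    by (rule card_Un_disjoint) auto
  ultimately show ?thesis
    unfolding badge_def by simp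
qed

lemma signatures_singleton:
  assumes "m \<in> badges p" and least: "\<And>c. c \<in> badges p \<Longrightarrow> badge_le m c"
  shows "signatures p = {m}"
proof -
  have "badge_le c m \<Longrightarrow> badge_le m c \<Longrightarrow> c = m" for c
    unfolding badge_le_def by (simp add: prod_eq_iff)
  then show ?thesis
    using assms unfolding signatures_def by blast
qed

lemma signatures_two_neighbours:
  assumes "(n, Suc n) \<in> badges p" "(Suc n, n) \<in> badges p"
    and bound: "\<And>a b. (a, b) \<in> badges p \<Longrightarrow> n \<le> a \<and> n \<le> b \<and> (a, b) \<noteq> (n, n)"
  shows "signatures p = {(n, Suc n), (Suc n, n)}"
proof
  show "signatures p \<subseteq> {(n, Suc n), (Suc n, n)}"
  proof
    fix c assume "c \<in> signatures p"
    then have c: "c \<in> badges p" "\<And>d. d \<in> badges p \<Longrightarrow> badge_le d c \<Longrightarrow> d = c"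
      unfolding signatures_def by auto
    obtain a b where "c = (a, b)" by (cases c)
    with c(1) bound have "badge_le (n, Suc n) c \<or> badge_le (Suc n, n) c"
      unfolding badge_le_def by fastforce
    with c(2) assms(1,2) show "c \<in> {(n, Suc n), (Suc n, n)}"
      by blast
  qed
  show "{(n, Suc n), (Suc n, n)} \<subseteq> signatures p"
    using assms unfolding signatures_def badge_le_def by fastforce
qed

lemma no_badge_22:
  assumes "-1 < l" "l \<le> 0"
  shows "(2, 2) \<notin> badges (q l)"
proof
  assume "(2, 2) \<in> badges (q l)"
  then obtain r lam al be where "(2, 2) = badge r lam" "honest_rep (q l) r lam al be"
    by (rule badgesE)
  moreover from this have "r = 4"
    using badge_card_sum by (metis fst_conv snd_conv numeral_Bit0 numeral_One one_plus_numeral)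
  ultimately show False
    using no_honest_rep_with_four_terms assms by blast
qed

lemma signatures_q_one: "signatures (q 1) = {(1, 1)}"
proof (rule signatures_singleton[OF badge_11])
  fix c assume c: "c \<in> badges (q 1)"
  obtain a b where "c = (a, b)" by (cases c)
  with c have "0 < a \<and> 0 < b"
    using badges_q_ge_1[of 1 a b] by simp
  with \<open>c = (a, b)\<close> show "badge_le (1, 1) c"
    unfolding badge_le_def by simp
qed

lemma signatures_q_positive:
  assumes "l > 0" "l \<noteq> 1"
  shows "signatures (q l) = {(2, 2)}"
proof (rule signatures_singleton[OF badge_22[OF assms]])
  fix c assume c: "c \<in> badges (q l)"
  obtain a b where "c = (a, b)" by (cases c)
  with c assms have "1 < a \<and> 1 < b"
    using badges_q_ge_2[of l a b] by simp
  with \<open>c = (a, b)\<close> show "badge_le (2, 2) c"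
    unfolding badge_le_def by simp
qed

lemma signatures_q_middle:
  assumes "-3/5 < l" "l \<le> 0"
  shows "signatures (q l) = {(2, 3), (3, 2)}"
proof -
  have "2 \<le> a \<and> 2 \<le> b \<and> (a, b) \<noteq> (2, 2)" if "(a, b) \<in> badges (q l)" for a b
    using that badges_q_ge_2[of l a b] no_badge_22[of l] assms by auto
  moreover have "(2, Suc 2) \<in> badges (q l)" "(Suc 2, 2) \<in> badges (q l)"
    using badges_32_and_23[OF assms] by (simp_all add: numeral_3_eq_3)
  ultimately have "signatures (q l) = {(2, Suc 2), (Suc 2, 2)}"
    by (intro signatures_two_neighbours)
  then show ?thesis
    by (simp add: numeral_3_eq_3)
qed

lemma signatures_q_negative:
  assumes "l \<le> -3/5"
  shows "signatures (q l) = {(3, 3)}"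
proof (rule signatures_singleton[OF badge_33])
  fix c assume c: "c \<in> badges (q l)"
  obtain a b where "c = (a, b)" by (cases c)
  with c have "2 < a \<and> 2 < b"
    using badges_q_ge_3[OF assms, of a b] by simp
  with \<open>c = (a, b)\<close> show "badge_le (3, 3) c"
    unfolding badge_le_def by simp
qed (use assms in simp)

theorem theorem4p4:
  fixes l :: real
  shows "(l = 1 \<longrightarrow> signatures (q l) = {(1, 1)}) \<and>
         (l > 0 \<and> l \<noteq> 1 \<longrightarrow> signatures (q l) = {(2, 2)}) \<and>
         (- 3 / 5 < l \<and> l \<le> 0 \<longrightarrow> signatures (q l) = {(2, 3), (3, 2)}) \<and>
         (l \<le> - 3 / 5 \<longrightarrow> signatures (q l) = {(3, 3)})"
proof (intro conjI impI)
  show "l = 1 \<Longrightarrow> signatures (q l) = {(1, 1)}"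
    using signatures_q_one by simp
  show "l > 0 \<and> l \<noteq> 1 \<Longrightarrow> signatures (q l) = {(2, 2)}"
    using signatures_q_positive by blast
  show "- 3 / 5 < l \<and> l \<le> 0 \<Longrightarrow> signatures (q l) = {(2, 3), (3, 2)}"
    using signatures_q_middle by blast
  show "l \<le> - 3 / 5 \<Longrightarrow> signatures (q l) = {(3, 3)}"
    by (rule signatures_q_negative)
qed

end
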